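(* Let $X$ be a thin combinatorial $2$-complex, let $\mathcal H\le\mathrm{Aut}(X)$, let $Y\subset X$ be an $\mathcal H$-cocompact subcomplex, and let $R$ be a $2$-cell of $X$ that is a missing $3$-shell of $Y$; let $Y'=Y\cup\bigcup_{h\in\mathcal H}hR$. Let $e$ be a $1$-cell of $X$ on $\partial R$, let $e_1,\dots,e_{m_e}$ be all the $1$-cells of the boundary cycle of $R$ that map to $\mathcal H$-translates of $e$, and let $\mathrm{Added}(e)=\mathrm{Sides}_X(Y',e)\setminus\mathrm{Sides}_X(Y,e)$. Then $$|\mathrm{Added}(e)|\ \ge\ \frac{m_e}{|\mathrm{Aut}_{\mathcal H}(R)|}.$$
   Context: $\mathrm{Aut}(X)$ is the group of cellular automorphisms. A side at a $1$-cell $x$ is a pair $(R,r)$ with $R$ a $2$-cell and $r$ a $1$-cell of the boundary cycle $\partial R$ mapping to $x$; $X$ is thin if each $1$-cell has finitely many sides. For a subcomplex $Z$, $\mathrm{Sides}_X(Z,x)$ is the set of sides at $x$ that lift to $Z$, i.e. $x\subset Z$ and $(R,r)\to(X,x)$ factors through $Z$. $Y$ is $\mathcal H$-cocompact if $\mathcal H$-invariant with finitely many $\mathcal H$-orbits of cells. A piece is a nontrivial path factoring through boundary cycles of two $2$-cells in essentially distinct ways (no compatible homeomorphism of the boundary cycles). A missing $3$-shell of $Y$ is a $2$-cell $R$ of $X$ not contained in $Y$ with $\partial R=QS$, $Q$ a path in $Y$, $S$ a concatenation of at most $3$ pieces. $\mathrm{Aut}_{\mathcal H}(R)=\mathrm{Stab}_{\mathcal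 H}(R)/\mathrm{Fix}_{\mathcal H}(R)$, where $\mathrm{Fix}_{\mathcal H}(R)$ is the pointwise stabilizer of $R$ in $\mathcal H$. *)

theory Defs
  imports Main Complex_Main
begin

text \<open>
The cells of X are the elements of types:
vertices 'v, oriented 1-cells (darts) 'd, 2-cells 'f.  A 1-cell of X is a pair
{d, flip d} of opposite darts.  src d is the initial vertex of d, its terminal
vertex is src (flip d).  The boundary cycle of a 2-cell R is the closed path
bnd R (a cyclic list of darts); the 1-cells of the boundary circle of R are the
positions i < length (bnd R), position i being attached along bnd R ! i.
\<close>

definition closed_path :: "('d \<Rightarrow> 'v) \<Rightarrow> ('d \<Rightarrow> 'd) \<Rightarrow> 'd list \<Rightarrow> bool" where
  "closed_path src flip w \<longleftrightarrow>
     (\<forall>i<length w. src (flip (w ! i)) = src (w ! ((i + 1) mod length w)))"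

definition is_path :: "('d \<Rightarrow> 'v) \<Rightarrow> ('d \<Rightarrow> 'd) \<Rightarrow> 'd list \<Rightarrow> bool" where
  "is_path src flip w \<longleftrightarrow> (\<forall>j. Suc j < length w \<longrightarrow> src (flip (w ! j)) = src (w ! Suc j))"

definition complex2 :: "('d \<Rightarrow> 'v) \<Rightarrow> ('d \<Rightarrow> 'd) \<Rightarrow> ('f \<Rightarrow> 'd list) \<Rightarrow> bool" where
  "complex2 src flip bnd \<longleftrightarrow>
     (\<forall>d. flip (flip d) = d \<and> flip d \<noteq> d) \<and> (\<forall>R. closed_path src flip (bnd R))"

definition thin :: "('d \<Rightarrow> 'd) \<Rightarrow> ('f \<Rightarrow> 'd list) \<Rightarrow> bool" where
  "thin flip bnd \<longleftrightarrow>
     (\<forall>d. finite {(R, i). i < length (bnd R) \<and> bnd R ! i \<in> {d, flip d}})"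

text \<open>Combinatorial (dihedral) self-maps of the boundary circle with n 1-cells:
rotation (o = True) or reflection (o = False), acting on 1-cell positions.\<close>
definition dpos :: "nat \<Rightarrow> int \<Rightarrow> bool \<Rightarrow> nat \<Rightarrow> nat" where
  "dpos n k ori i = (if ori then nat ((k + int i) mod int n) else nat ((k - 1 - int i) mod int n))"

text \<open>A cellular map: action on vertices, darts, 2-cells, and for each 2-cell R
the induced map of the boundary circle of R onto that of its image.\<close>
datatype ('v, 'd, 'f) cellmap =
  CM (cv: "'v \<Rightarrow> 'v") (cd: "'d \<Rightarrow> 'd") (cf: "'f \<Rightarrow> 'f") (cb: "'f \<Rightarrow> nat \<Rightarrow> nat")

definition is_aut :: "('d \<Rightarrow> 'v) \<Rightarrow> ('d \<Rightarrow> 'd) \<Rightarrow> ('f \<Rightarrow> 'd list) \<Rightarrow> ('v, 'd, 'f) cellmap \<Rightarrow> bool" where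
  "is_aut src flip bnd g \<longleftrightarrow>
     bij (cv g) \<and> bij (cd g) \<and> bij (cf g) \<and>
     (\<forall>d. cd g (flip d) = flip (cd g d) \<and> src (cd g d) = cv g (src d)) \<and>
     (\<forall>R. length (bnd (cf g R)) = length (bnd R) \<and>
        (\<exists>k ori. \<forall>i. cb g R i = (if i < length (bnd R) then dpos (length (bnd R)) k ori i else i) \<and>
           (i < length (bnd R) \<longrightarrow>
              bnd (cf g R) ! cb g R i = (if ori then cd g (bnd R ! i) else flip (cd g (bnd R ! i))))))"

definition comp_cm :: "('v, 'd, 'f) cellmap \<Rightarrow> ('v, 'd, 'f) cellmap \<Rightarrow> ('v, 'd, 'f) cellmap" where
  "comp_cm g h = CM (cv g \<circ> cv h) (cd g \<circ> cd h) (cf g \<circ> cf h) (\<lambda>R. cb g (cf h R) \<circ> cb h R)"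

definition id_cm :: "('v, 'd, 'f) cellmap" where
  "id_cm = CM id id id (\<lambda>R. id)"

definition aut_subgroup :: "('d \<Rightarrow> 'v) \<Rightarrow> ('d \<Rightarrow> 'd) \<Rightarrow> ('f \<Rightarrow> 'd list) \<Rightarrow> ('v, 'd, 'f) cellmap set \<Rightarrow> bool" where
  "aut_subgroup src flip bnd H \<longleftrightarrow>
     (\<forall>g\<in>H. is_aut src flip bnd g) \<and> id_cm \<in> H \<and>
     (\<forall>g\<in>H. \<forall>h\<in>H. comp_cm g h \<in> H) \<and>
     (\<forall>g\<in>H. \<exists>h\<in>H. comp_cm g h = id_cm \<and> comp_cm h g = id_cm)"

definition subcomplex :: "('d \<Rightarrow> 'v) \<Rightarrow> ('d \<Rightarrow> 'd) \<Rightarrow> ('f \<Rightarrow> 'd list) \<Rightarrow> 'v set \<Rightarrow> 'd set \<Rightarrow> 'f set \<Rightarrow> bool" where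
  "subcomplex src flip bnd Yv Yd Yf \<longleftrightarrow>
     (\<forall>d\<in>Yd. flip d \<in> Yd \<and> src d \<in> Yv) \<and> (\<forall>R\<in>Yf. set (bnd R) \<subseteq> Yd)"

definition cocompact :: "('d \<Rightarrow> 'd) \<Rightarrow> ('v, 'd, 'f) cellmap set \<Rightarrow> 'v set \<Rightarrow> 'd set \<Rightarrow> 'f set \<Rightarrow> bool" where
  "cocompact flip H Yv Yd Yf \<longleftrightarrow>
     (\<forall>h\<in>H. cv h ` Yv \<subseteq> Yv \<and> cd h ` Yd \<subseteq> Yd \<and> cf h ` Yf \<subseteq> Yf) \<and>
     finite ((\<lambda>v. (\<lambda>h. cv h v) ` H) ` Yv) \<and>
     finite ((\<lambda>d. (\<lambda>h. cd h ` {d, flip d}) ` H) ` Yd) \<and>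
     finite ((\<lambda>R. (\<lambda>h. cf h R) ` H) ` Yf)"

definition sides_in :: "('d \<Rightarrow> 'd) \<Rightarrow> ('f \<Rightarrow> 'd list) \<Rightarrow> 'd set \<Rightarrow> 'f set \<Rightarrow> 'd \<Rightarrow> ('f \<times> nat) set" where
  "sides_in flip bnd Zd Zf d =
     {(R, i). d \<in> Zd \<and> R \<in> Zf \<and> i < length (bnd R) \<and> bnd R ! i \<in> {d, flip d}}"

text \<open>Darts of the boundary circle of a 2-cell: (position, forward?).\<close>
definition circ_start :: "nat \<Rightarrow> nat \<times> bool \<Rightarrow> nat" where
  "circ_start n c = (if snd c then fst c else (fst c + 1) mod n)"

definition circ_end :: "nat \<Rightarrow> nat \<times> bool \<Rightarrow> nat" where
  "circ_end n c = (if snd c then (fst c + 1) mod n else fst c)"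

definition attach :: "('d \<Rightarrow> 'd) \<Rightarrow> ('f \<Rightarrow> 'd list) \<Rightarrow> 'f \<Rightarrow> nat \<times> bool \<Rightarrow> 'd" where
  "attach flip bnd R c = (if snd c then bnd R ! fst c else flip (bnd R ! fst c))"

definition lifts :: "('d \<Rightarrow> 'd) \<Rightarrow> ('f \<Rightarrow> 'd list) \<Rightarrow> 'f \<Rightarrow> 'd list \<Rightarrow> (nat \<times> bool) list \<Rightarrow> bool" where
  "lifts flip bnd R P l \<longleftrightarrow>
     length l = length P \<and>
     (\<forall>j<length l. fst (l ! j) < length (bnd R) \<and> attach flip bnd R (l ! j) = P ! j) \<and>
     (\<forall>j. Suc j < length l \<longrightarrow>
        circ_end (length (bnd R)) (l ! j) = circ_start (length (bnd R)) (l ! Suc j))"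

definition dmap :: "nat \<Rightarrow> int \<Rightarrow> bool \<Rightarrow> nat \<times> bool \<Rightarrow> nat \<times> bool" where
  "dmap n k ori c = (dpos n k ori (fst c), (if ori then snd c else \<not> snd c))"

text \<open>The two lifts differ by a compatible homeomorphism of boundary circles.\<close>
definition compatible_lifts :: "('d \<Rightarrow> 'd) \<Rightarrow> ('f \<Rightarrow> 'd list) \<Rightarrow> 'f \<Rightarrow> 'f \<Rightarrow>
    (nat \<times> bool) list \<Rightarrow> (nat \<times> bool) list \<Rightarrow> bool" where
  "compatible_lifts flip bnd R1 R2 l1 l2 \<longleftrightarrow>
     length (bnd R1) = length (bnd R2) \<and>
     (\<exists>k ori. (\<forall>i<length (bnd R1). \<forall>b.
                attach flip bnd R2 (dmap (length (bnd R1)) k ori (i, b)) = attach flip bnd R1 (i, b)) \<and>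
            map (dmap (length (bnd R1)) k ori) l1 = l2)"

definition piece :: "('d \<Rightarrow> 'v) \<Rightarrow> ('d \<Rightarrow> 'd) \<Rightarrow> ('f \<Rightarrow> 'd list) \<Rightarrow> 'd list \<Rightarrow> bool" where
  "piece src flip bnd P \<longleftrightarrow>
     P \<noteq> [] \<and> is_path src flip P \<and>
     (\<exists>R1 R2 l1 l2. lifts flip bnd R1 P l1 \<and> lifts flip bnd R2 P l2 \<and>
        \<not> compatible_lifts flip bnd R1 R2 l1 l2)"

definition missing_3_shell :: "('d \<Rightarrow> 'v) \<Rightarrow> ('d \<Rightarrow> 'd) \<Rightarrow> ('f \<Rightarrow> 'd list) \<Rightarrow>
    'v set \<Rightarrow> 'd set \<Rightarrow> 'f set \<Rightarrow> 'f \<Rightarrow> bool" where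
  "missing_3_shell src flip bnd Yv Yd Yf R \<longleftrightarrow>
     R \<notin> Yf \<and>
     (\<exists>cw Q S. (cw \<in> range (\<lambda>k. rotate k (bnd R)) \<or> cw \<in> range (\<lambda>k. rotate k (rev (map flip (bnd R))))) \<and>
        cw = Q @ S \<and> set Q \<subseteq> Yd \<and> (cw \<noteq> [] \<longrightarrow> src (hd cw) \<in> Yv) \<and>
        (\<exists>ps. length ps \<le> 3 \<and> (\<forall>p\<in>set ps. piece src flip bnd p) \<and> concat ps = S))"

text \<open>|Aut_H(R)| = number of cosets of Fix_H(R) in Stab_H(R).\<close>
definition stab_H :: "('v, 'd, 'f) cellmap set \<Rightarrow> 'f \<Rightarrow> ('v, 'd, 'f) cellmap set" where
  "stab_H H R = {h \<in> H. cf h R = R}"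

definition fix_H :: "('f \<Rightarrow> 'd list) \<Rightarrow> ('v, 'd, 'f) cellmap set \<Rightarrow> 'f \<Rightarrow> ('v, 'd, 'f) cellmap set" where
  "fix_H bnd H R = {h \<in> stab_H H R. \<forall>i<length (bnd R). cb h R i = i}"

definition aut_H_card :: "('f \<Rightarrow> 'd list) \<Rightarrow> ('v, 'd, 'f) cellmap set \<Rightarrow> 'f \<Rightarrow> nat" where
  "aut_H_card bnd H R = card ((\<lambda>g. comp_cm g ` fix_H bnd H R) ` stab_H H R)"

end

theory Submission
  imports Defs
begin

text \<open>
Every position i of the boundary of R that lies over an H-translate of e is carried by some
g \<in> H onto e, giving the side (g R, g i) at e; it is an added side because Y is H-invariant
and R \<notin> Y.  Two positions giving the same side differ by an element of Stab_H(R), so each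
fibre of this assignment lies in a Stab_H(R)-orbit of positions.  The orbit map of a position
is constant on the cosets of Fix_H(R), so such an orbit has at most |Aut_H(R)| elements.
\<close>

lemma card_image_le_card_image_if_factors:
  assumes "finite (q ` S)" "\<And>x y. x \<in> S \<Longrightarrow> y \<in> S \<Longrightarrow> q x = q y \<Longrightarrow> f x = f y"
  shows "card (f ` S) \<le> card (q ` S)"
proof -
  have "f x = f (inv_into S q (q x))" if "x \<in> S" for x
  proof (rule assms(2)[OF that])
    show "inv_into S q (q x) \<in> S" "q x = q (inv_into S q (q x))"
      using that by (simp_all add: inv_into_into f_inv_into_f)
  qed
  then have "f ` S = (\<lambda>c. f (inv_into S q c)) ` q ` S"
    by (simp add: image_image cong: image_cong)
  then show ?thesis
    using assms(1) card_image_le by metis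
qed

lemma card_le_card_mult_if_fibres_bounded:
  assumes "finite T" "f ` M \<subseteq> T" "\<And>t. card {x \<in> M. f x = t} \<le> A"
  shows "card M \<le> card T * A"
proof -
  have "M = (\<Union>t\<in>T. {x \<in> M. f x = t})"
    using assms(2) by blast
  then have "card M \<le> (\<Sum>t\<in>T. card {x \<in> M. f x = t})"
    by (metis assms(1) card_UN_le)
  also have "\<dots> \<le> card T * A"
    using sum_bounded_above[of T "\<lambda>t. card {x \<in> M. f x = t}" A] assms(3) by simp
  finally show ?thesis .
qed

lemma dpos_less: "0 < n \<Longrightarrow> dpos n k ori i < n"
  unfolding dpos_def by (simp add: nat_less_iff)

lemma is_aut_boundary_position:
  assumes "is_aut src flip bnd g" "i < length (bnd R)"
  shows "cb g R i < length (bnd (cf g R))"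
    and "bnd (cf g R) ! cb g R i \<in> {cd g (bnd R ! i), flip (cd g (bnd R ! i))}"
proof -
  obtain k ori where len: "length (bnd (cf g R)) = length (bnd R)"
    and cb: "cb g R i = dpos (length (bnd R)) k ori i"
    and bnd: "bnd (cf g R) ! cb g R i = (if ori then cd g (bnd R ! i) else flip (cd g (bnd R ! i)))"
    using assms unfolding is_aut_def by metis
  have "0 < length (bnd R)"
    using assms(2) by linarith
  then show "cb g R i < length (bnd (cf g R))"
    by (simp add: len cb dpos_less)
  show "bnd (cf g R) ! cb g R i \<in> {cd g (bnd R ! i), flip (cd g (bnd R ! i))}"
    using bnd by simp
qed

lemma comp_cm_eq_id_cm_cancel:
  assumes "comp_cm h g = id_cm"
  shows "cf h (cf g x) = x" and "cd h (cd g d) = d" and "cb h (cf g R) (cb g R i) = i"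
  using arg_cong[OF assms, of "\<lambda>c. cf c x"] arg_cong[OF assms, of "\<lambda>c. cd c d"]
    arg_cong[OF assms, of "\<lambda>c. cb c R i"]
  by (simp_all add: comp_cm_def id_cm_def)

lemma aut_subgroup_is_aut:
  "aut_subgroup src flip bnd H \<Longrightarrow> g \<in> H \<Longrightarrow> is_aut src flip bnd g"
  unfolding aut_subgroup_def by blast

lemma aut_subgroup_left_inverse:
  "aut_subgroup src flip bnd H \<Longrightarrow> g \<in> H \<Longrightarrow> \<exists>h\<in>H. comp_cm h g = id_cm"
  unfolding aut_subgroup_def by blast

lemma translate_onto_edge:
  assumes "complex2 src flip bnd" "aut_subgroup src flip bnd H"
    and "i < length (bnd R)" "h \<in> H" "bnd R ! i \<in> {cd h e, flip (cd h e)}"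
  shows "\<exists>g\<in>H. bnd (cf g R) ! cb g R i \<in> {e, flip e}"
proof -
  obtain g where g: "g \<in> H" "comp_cm g h = id_cm"
    using aut_subgroup_left_inverse[OF assms(2,4)] by blast
  have aut: "is_aut src flip bnd g"
    using aut_subgroup_is_aut[OF assms(2) g(1)] .
  have flip_flip: "flip (flip d) = d" for d
    using assms(1) unfolding complex2_def by blast
  have cd_flip: "cd g (flip d) = flip (cd g d)" for d
    using aut unfolding is_aut_def by blast
  have "cd g (bnd R ! i) \<in> {e, flip e}"
    using assms(5) comp_cm_eq_id_cm_cancel(2)[OF g(2)] cd_flip flip_flip by auto
  then have "bnd (cf g R) ! cb g R i \<in> {e, flip e}"
    using is_aut_boundary_position(2)[OF aut assms(3)] cd_flip flip_flip by auto
  with g(1) show ?thesis by blast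
qed

lemma translate_notin_invariant:
  assumes "aut_subgroup src flip bnd H" "\<forall>h\<in>H. cf h ` Yf \<subseteq> Yf" "R \<notin> Yf" "g \<in> H"
  shows "cf g R \<notin> Yf"
proof
  assume "cf g R \<in> Yf"
  obtain h where "h \<in> H" "comp_cm h g = id_cm"
    using aut_subgroup_left_inverse[OF assms(1,4)] by blast
  then have "R \<in> cf h ` Yf"
    using \<open>cf g R \<in> Yf\<close> comp_cm_eq_id_cm_cancel(1) by (metis image_eqI)
  with assms(2,3) \<open>h \<in> H\<close> show False by blast
qed

lemma translate_gives_added_side:
  assumes "aut_subgroup src flip bnd H" "\<forall>h\<in>H. cf h ` Yf \<subseteq> Yf" "R \<notin> Yf"
    and "g \<in> H" "i < length (bnd R)" "bnd (cf g R) ! cb g R i \<in> {e, flip e}"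
  shows "(cf g R, cb g R i) \<in> sides_in flip bnd
            (Yd \<union> {d. \<exists>h\<in>H. d \<in> set (bnd (cf h R)) \<or> flip d \<in> set (bnd (cf h R))})
            (Yf \<union> (\<lambda>h. cf h R) ` H) e
          - sides_in flip bnd Yd Yf e"
proof -
  have pos: "cb g R i < length (bnd (cf g R))"
    using is_aut_boundary_position(1)[OF aut_subgroup_is_aut[OF assms(1,4)] assms(5)] .
  then have "e \<in> set (bnd (cf g R)) \<or> flip e \<in> set (bnd (cf g R))"
    using assms(6) nth_mem by fastforce
  then show ?thesis
    using assms(4,6) pos translate_notin_invariant[OF assms(1-4)]
    unfolding sides_in_def by blast
qed

lemma equal_translates_in_stab_H_orbit:
  assumes "aut_subgroup src flip bnd H" "g \<in> H" "g' \<in> H"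
    and "cf g R = cf g' R" "cb g R i = cb g' R i'"
  shows "i' \<in> (\<lambda>k. cb k R i) ` stab_H H R"
proof -
  obtain h where h: "h \<in> H" "comp_cm h g' = id_cm"
    using aut_subgroup_left_inverse[OF assms(1,3)] by blast
  have "comp_cm h g \<in> H"
    using assms(1,2) h(1) unfolding aut_subgroup_def by blast
  moreover have "cf (comp_cm h g) R = R"
    using assms(4) comp_cm_eq_id_cm_cancel(1)[OF h(2)] by (simp add: comp_cm_def)
  moreover have "cb (comp_cm h g) R i = i'"
    using assms(4,5) comp_cm_eq_id_cm_cancel(3)[OF h(2)] by (simp add: comp_cm_def)
  ultimately show ?thesis
    unfolding stab_H_def by (metis (mono_tags, lifting) image_eqI mem_Collect_eq)
qed

lemma stab_H_orbit_subset:
  assumes "aut_subgroup src flip bnd H" "i < length (bnd R)"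
  shows "(\<lambda>k. cb k R i) ` stab_H H R \<subseteq> {..<length (bnd R)}"
proof
  fix j assume "j \<in> (\<lambda>k. cb k R i) ` stab_H H R"
  then obtain k where k: "k \<in> H" "cf k R = R" "j = cb k R i"
    unfolding stab_H_def by blast
  then have "is_aut src flip bnd k"
    using aut_subgroup_is_aut[OF assms(1)] by blast
  then show "j \<in> {..<length (bnd R)}"
    using is_aut_boundary_position(1)[of src flip bnd k i R] assms(2) k by simp
qed

lemma card_stab_H_orbit_le_aut_H_card:
  assumes "aut_subgroup src flip bnd H" "i < length (bnd R)" "aut_H_card bnd H R \<noteq> 0"
  shows "card ((\<lambda>k. cb k R i) ` stab_H H R) \<le> aut_H_card bnd H R"
  unfolding aut_H_card_def
proof (rule card_image_le_card_image_if_factors)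
  show "finite ((\<lambda>g. comp_cm g ` fix_H bnd H R) ` stab_H H R)"
    using assms(3) unfolding aut_H_card_def by (meson card.infinite)
next
  fix k k' assume cosets: "comp_cm k ` fix_H bnd H R = comp_cm k' ` fix_H bnd H R"
  have "id_cm \<in> fix_H bnd H R"
    using assms(1) unfolding aut_subgroup_def fix_H_def stab_H_def by (simp add: id_cm_def)
  then obtain f where f: "f \<in> fix_H bnd H R" "comp_cm k' id_cm = comp_cm k f"
    using cosets by (metis image_eqI imageE)
  have "cf f R = R" "cb f R i = i"
    using f(1) assms(2) unfolding fix_H_def stab_H_def by auto
  then show "cb k R i = cb k' R i"
    using arg_cong[OF f(2), of "\<lambda>c. cb c R i"] by (simp add: comp_cm_def id_cm_def)
qed

lemma card_same_translated_position_le: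
  assumes "aut_subgroup src flip bnd H" "aut_H_card bnd H R \<noteq> 0"
    and "\<forall>i\<in>M. i < length (bnd R) \<and> g i \<in> H"
  shows "card {i \<in> M. (cf (g i) R, cb (g i) R i) = s} \<le> aut_H_card bnd H R"
proof (cases "\<exists>i0 \<in> M. (cf (g i0) R, cb (g i0) R i0) = s")
  case True
  then obtain i0 where i0: "i0 \<in> M" "(cf (g i0) R, cb (g i0) R i0) = s" by blast
  then have "i0 < length (bnd R)" using assms(3) by blast
  have "{i \<in> M. (cf (g i) R, cb (g i) R i) = s} \<subseteq> (\<lambda>k. cb k R i0) ` stab_H H R"
  proof
    fix i assume "i \<in> {i \<in> M. (cf (g i) R, cb (g i) R i) = s}"
    then show "i \<in> (\<lambda>k. cb k R i0) ` stab_H H R"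
      using equal_translates_in_stab_H_orbit[OF assms(1), of "g i0" "g i" R i0 i] assms(3) i0
      by auto
  qed
  moreover have "finite ((\<lambda>k. cb k R i0) ` stab_H H R)"
    using stab_H_orbit_subset[OF assms(1) \<open>i0 < length (bnd R)\<close>] finite_subset by blast
  ultimately show ?thesis
    using card_stab_H_orbit_le_aut_H_card[OF assms(1) \<open>i0 < length (bnd R)\<close> assms(2)]
    by (meson card_mono order_trans)
next
  case False
  then have "{i \<in> M. (cf (g i) R, cb (g i) R i) = s} = {}" by blast
  then show ?thesis by (simp only: card.empty le0)
qed

lemma card_translate_positions_le:
  fixes Yd :: "'d set" and e :: 'd
  assumes "complex2 src flip bnd" "thin flip bnd" "aut_subgroup src flip bnd H"
    and "\<forall>h\<in>H. cf h ` Yf \<subseteq> Yf" "R \<notin> Yf" "aut_H_card bnd H R \<noteq> 0"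
  defines "Added \<equiv> sides_in flip bnd
            (Yd \<union> {d. \<exists>h\<in>H. d \<in> set (bnd (cf h R)) \<or> flip d \<in> set (bnd (cf h R))})
            (Yf \<union> (\<lambda>h. cf h R) ` H) e
          - sides_in flip bnd Yd Yf e"
  shows "card {i. i < length (bnd R) \<and> (\<exists>h\<in>H. bnd R ! i \<in> {cd h e, flip (cd h e)})}
           \<le> card Added * aut_H_card bnd H R"
proof -
  define M where "M = {i. i < length (bnd R) \<and> (\<exists>h\<in>H. bnd R ! i \<in> {cd h e, flip (cd h e)})}"
  define g where "g i = (SOME g. g \<in> H \<and> bnd (cf g R) ! cb g R i \<in> {e, flip e})" for i
  have g: "g i \<in> H \<and> bnd (cf (g i) R) ! cb (g i) R i \<in> {e, flip e}" if "i \<in> M" for i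
  proof -
    have "\<exists>g. g \<in> H \<and> bnd (cf g R) ! cb g R i \<in> {e, flip e}"
      using translate_onto_edge[OF assms(1,3)] that unfolding M_def by blast
    then show ?thesis
      unfolding g_def by (rule someI_ex)
  qed
  have positions: "\<forall>i\<in>M. i < length (bnd R) \<and> g i \<in> H"
    using g unfolding M_def by blast
  define side where "side i = (cf (g i) R, cb (g i) R i)" for i
  have "Added \<subseteq> {(R, i). i < length (bnd R) \<and> bnd R ! i \<in> {e, flip e}}"
    unfolding Added_def sides_in_def by auto
  then have "finite Added"
    using assms(2) unfolding thin_def by (blast intro: finite_subset)
  moreover have "side ` M \<subseteq> Added"
  proof
    fix s assume "s \<in> side ` M"
    then obtain i where "i \<in> M" "s = side i" by blast
    then show "s \<in> Added"
      using translate_gives_added_side[OF assms(3-5)] g[OF \<open>i \<in> M\<close>]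
      unfolding side_def Added_def M_def by blast
  qed
  moreover have "card {i \<in> M. side i = s} \<le> aut_H_card bnd H R" for s
    unfolding side_def by (rule card_same_translated_position_le[OF assms(3,6) positions])
  ultimately show ?thesis
    unfolding M_def[symmetric] by (rule card_le_card_mult_if_fibres_bounded)
qed

theorem lemma3p15:
  fixes src :: "'d \<Rightarrow> 'v" and flip :: "'d \<Rightarrow> 'd" and bnd :: "'f \<Rightarrow> 'd list"
    and H :: "('v, 'd, 'f) cellmap set"
    and Yv :: "'v set" and Yd :: "'d set" and Yf :: "'f set" and R :: 'f and e :: 'd
  assumes "complex2 src flip bnd"
    and "thin flip bnd"
    and "aut_subgroup src flip bnd H"
    and "subcomplex src flip bnd Yv Yd Yf"
    and "cocompact flip H Yv Yd Yf"
    and "missing_3_shell src flip bnd Yv Yd Yf R"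
    and "\<exists>i<length (bnd R). bnd R ! i \<in> {e, flip e}"
  shows "real (card (sides_in flip bnd
                (Yd \<union> {d. \<exists>h\<in>H. d \<in> set (bnd (cf h R)) \<or> flip d \<in> set (bnd (cf h R))})
                (Yf \<union> (\<lambda>h. cf h R) ` H) e
              - sides_in flip bnd Yd Yf e))
         \<ge> real (card {i. i < length (bnd R) \<and> (\<exists>h\<in>H. bnd R ! i \<in> {cd h e, flip (cd h e)})})
           / real (aut_H_card bnd H R)"
proof (cases "aut_H_card bnd H R = 0")
  \<comment> \<open>Infinitely many cosets give card 0, and then the bound is trivial since x / 0 = 0.\<close>
  case False
  have "\<forall>h\<in>H. cf h ` Yf \<subseteq> Yf"
    using assms(5) unfolding cocompact_def by blast
  moreover have "R \<notin> Yf"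
    using assms(6) unfolding missing_3_shell_def by blast
  ultimately show ?thesis
    using card_translate_positions_le[OF assms(1-3) _ _ False, where Yd = Yd and e = e] False
    by (simp add: divide_le_eq flip: of_nat_mult)
qed simp

end
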